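(* Let $q=2^n$, let $B$ be a $k$-subset of $\mathrm{GF}(q)$ with $k\ge3$, and let $\mathcal B=\mathrm{GA}_1(q)(B)$. Let $E$ be a subset of $\mathrm{GF}(q)$ such that $\hat f_B(\mu)=\hat f_E(\mu^d)$ for all $\mu\in\mathrm{GF}(q)$, where $\gcd(d,q-1)=1$. Then the following are equivalent: (1) $(\mathrm{GF}(q),\mathcal B)$ is a $3$-design; (2) $\sum_{x,y\in\mathrm{GF}(q)}(-1)^{f_E(x)+f_E(y)+f_E(u^dx+(1+u)^dy)}$ is independent of $u\in\mathrm{GF}(q)\setminus\mathrm{GF}(2)$; (3) $\sum_{\alpha\in\mathrm{GF}(q)}\hat f_E(\alpha)\hat f_E(u^d\alpha)\hat f_E((1+u)^d\alpha)$ is independent of $u\in\mathrm{GF}(q)\setminus\mathrm{GF}(2)$; (4) $N_E(u^d,(1+u)^d,1)$ is independent of $u\in\mathrm{GF}(q)\setminus\mathrm{GF}(2)$.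
   Context: $\mathrm{Tr}$ is the absolute trace $\mathrm{GF}(2^n)\to\mathrm{GF}(2)$. For $S\subseteq\mathrm{GF}(q)$, $f_S$ is its characteristic function as a Boolean function, and $\hat f(\mu)=\sum_{x\in\mathrm{GF}(2^n)}(-1)^{f(x)+\mathrm{Tr}(\mu x)}$ is the Walsh transform. $N_S(a,b,c)$ is the number of triples $(x,y,z)\in S^3$ with $ax+by+cz=0$. $\mathrm{GA}_1(q)$ is the group of permutations $x\mapsto ax+b$ of $\mathrm{GF}(q)$ with $a\ne0$; $\mathrm{GA}_1(q)(B)=\{\pi(B):\pi\in\mathrm{GA}_1(q)\}$. A pair $(\mathcal P,\mathcal B)$ with $\mathcal B$ a set of $k$-subsets of $\mathcal P$ is a $3$-design if every $3$-subset of $\mathcal P$ lies in exactly $\lambda$ members of $\mathcal B$ for some constant $\lambda$. *)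

theory Defs
  imports Main
begin

text \<open>GF(2^n) is modelled as an arbitrary finite field type 'a with CARD('a) = 2^n
  (hence of characteristic 2).\<close>

definition abs_trace :: "nat \<Rightarrow> 'a::field \<Rightarrow> 'a" where
  "abs_trace n x = (\<Sum>i<n. x ^ (2 ^ i))"

text \<open>(-1)^t for t an element of the prime field GF(2) = {0,1}.\<close>
definition sgn_gf2 :: "'a::field \<Rightarrow> int" where
  "sgn_gf2 t = (if t = 0 then 1 else -1)"

definition charf :: "'a set \<Rightarrow> 'a \<Rightarrow> nat" where
  "charf S x = (if x \<in> S then 1 else 0)"

definition walsh :: "nat \<Rightarrow> ('a::{field,finite}) set \<Rightarrow> 'a \<Rightarrow> int" where
  "walsh n S \<mu> = (\<Sum>x\<in>UNIV. (-1) ^ charf S x * sgn_gf2 (abs_trace n (\<mu> * x)))"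

definition N_count :: "('a::{field,finite}) set \<Rightarrow> 'a \<Rightarrow> 'a \<Rightarrow> 'a \<Rightarrow> nat" where
  "N_count S a b c = card {(x, y, z). x \<in> S \<and> y \<in> S \<and> z \<in> S \<and> a * x + b * y + c * z = 0}"

definition GA1_orbit :: "('a::field) set \<Rightarrow> 'a set set" where
  "GA1_orbit B = {(\<lambda>x. a * x + b) ` B | a b. a \<noteq> 0}"

definition is_3_design :: "'a set \<Rightarrow> 'a set set \<Rightarrow> bool" where
  "is_3_design P Bs \<longleftrightarrow> (\<exists>lam::nat. \<forall>T. T \<subseteq> P \<and> card T = 3 \<longrightarrow>
       card {Bl \<in> Bs. T \<subseteq> Bl} = lam)"

end

(*
  The blocks of GA_1(q)(B) through three distinct points t0, t1, t2 correspond, up to the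
  stabiliser of B, to the pairs x != y in B with x + r (y - x) in B, where r = (t2 - t0)/(t1 - t0)
  ranges over GF(q) - {0, 1}; so (1) says that the number of such pairs does not depend on r.
  In characteristic 2 this number is N_B(1 + r, r, 1) - k. Expanding N_B in additive characters
  expresses it through the Walsh spectrum of B, and the hypothesis on the spectra together with the
  bijectivity of x |-> x^d gives N_B(a, b, c) = N_E(a^d, b^d, c^d). Finally the sums in (2) and (3)
  are affine functions of N_E(u^d, (1 + u)^d, 1) with nonzero slope, so all four conditions say
  that this count is independent of u.
*)

theory Submission
  imports Defs "HOL-Number_Theory.Residues" "HOL-Algebra.Algebraic_Closure_Type"
begin

lemma ex_constant_iff_inj_comp:
  assumes "inj g" and "\<And>u. P u \<Longrightarrow> f u = g (h u)"
  shows "(\<exists>c. \<forall>u. P u \<longrightarrow> f u = c) \<longleftrightarrow> (\<exists>c. \<forall>u. P u \<longrightarrow> h u = c)"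
proof
  assume "\<exists>c. \<forall>u. P u \<longrightarrow> f u = c"
  then obtain c where "\<And>u. P u \<Longrightarrow> g (h u) = c"
    using assms(2) by metis
  then have "\<And>u v. P u \<Longrightarrow> P v \<Longrightarrow> h u = h v"
    using assms(1) by (metis injD)
  then show "\<exists>c. \<forall>u. P u \<longrightarrow> h u = c"
    by blast
qed (use assms(2) in auto)

section \<open>Affine orbits and 3-designs\<close>

definition affine :: "'a::field \<times> 'a \<Rightarrow> 'a \<Rightarrow> 'a" where
  "affine p x = fst p * x + snd p"

lemma inj_affine: "fst p \<noteq> 0 \<Longrightarrow> inj (affine p)"
  by (auto intro: injI simp: affine_def)

lemma mem_affine_image_iff:
  assumes "fst p \<noteq> 0"
  shows "t \<in> affine p ` B \<longleftrightarrow> (t - snd p) / fst p \<in> B"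
  using assms by (force simp: affine_def field_simps)

lemma GA1_orbit_eq_image: "GA1_orbit B = (\<lambda>p. affine p ` B) ` {p. fst p \<noteq> 0}"
  unfolding GA1_orbit_def affine_def by (auto simp: image_iff) (metis fst_conv snd_conv)

lemma card_affine_fiber:
  assumes "a0 \<noteq> 0"
  shows "card {p. fst p \<noteq> 0 \<and> affine p ` B = affine (a0, b0) ` B}
       = card {p. fst p \<noteq> 0 \<and> affine p ` B = B}"
proof -
  let ?stab = "{p. fst p \<noteq> 0 \<and> affine p ` B = B}"
  define comp where "comp p = (a0 * fst p, a0 * snd p + b0)" for p :: "'a \<times> 'a"
  have affine_comp: "affine (comp p) ` B = affine (a0, b0) ` affine p ` B" for p
    by (simp add: comp_def affine_def image_image algebra_simps)
  have "{p. fst p \<noteq> 0 \<and> affine p ` B = affine (a0, b0) ` B} = comp ` ?stab"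
  proof (intro equalityI subsetI)
    fix p assume p: "p \<in> {p. fst p \<noteq> 0 \<and> affine p ` B = affine (a0, b0) ` B}"
    define q where "q = (fst p / a0, (snd p - b0) / a0)"
    have p_eq: "p = comp q"
      using assms by (simp add: q_def comp_def)
    then have "affine (a0, b0) ` affine q ` B = affine (a0, b0) ` B"
      using p affine_comp by simp
    then have "affine q ` B = B"
      using assms inj_affine[of "(a0, b0)"] by (simp add: inj_image_eq_iff)
    moreover have "fst q \<noteq> 0"
      using p assms by (simp add: q_def)
    ultimately show "p \<in> comp ` ?stab"
      using p_eq by blast
  next
    fix p assume "p \<in> comp ` ?stab"
    then obtain q where q: "q \<in> ?stab" "p = comp q"
      by blast
    then have "affine p ` B = affine (a0, b0) ` B"
      using affine_comp[of q] by simp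
    moreover have "fst p \<noteq> 0"
      using q assms by (simp add: comp_def)
    ultimately show "p \<in> {p. fst p \<noteq> 0 \<and> affine p ` B = affine (a0, b0) ` B}"
      by simp
  qed
  moreover have "inj comp"
    using assms by (auto intro: injI simp: comp_def)
  ultimately show ?thesis
    by (simp add: card_image inj_on_subset)
qed

lemma card_affine_covering:
  fixes B :: "'a::{field,finite} set"
  shows "card {p. fst p \<noteq> 0 \<and> T \<subseteq> affine p ` B}
       = card {Bl \<in> GA1_orbit B. T \<subseteq> Bl} * card {p. fst p \<noteq> 0 \<and> affine p ` B = B}"
proof -
  let ?blocks = "{Bl \<in> GA1_orbit B. T \<subseteq> Bl}"
  let ?fiber = "\<lambda>Bl. {p. fst p \<noteq> 0 \<and> affine p ` B = Bl}"
  have "{p. fst p \<noteq> 0 \<and> T \<subseteq> affine p ` B} = (\<Union>Bl\<in>?blocks. ?fiber Bl)"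
    unfolding GA1_orbit_eq_image by auto
  then have "card {p. fst p \<noteq> 0 \<and> T \<subseteq> affine p ` B} = (\<Sum>Bl\<in>?blocks. card (?fiber Bl))"
    by (simp only:) (rule card_UN_disjoint; auto)
  also have "\<dots> = (\<Sum>Bl\<in>?blocks. card (?fiber B))"
  proof (rule sum.cong)
    fix Bl assume "Bl \<in> ?blocks"
    then obtain a0 b0 where "a0 \<noteq> 0" "Bl = affine (a0, b0) ` B"
      unfolding GA1_orbit_eq_image by auto
    then show "card (?fiber Bl) = card (?fiber B)"
      by (simp add: card_affine_fiber)
  qed simp
  finally show ?thesis
    by simp
qed

lemma bij_betw_affine_preimages:
  fixes t0 t1 :: "'a::field"
  assumes "t0 \<noteq> t1"
  shows "bij_betw (\<lambda>p. ((t0 - snd p) / fst p, (t1 - snd p) / fst p)) {p. fst p \<noteq> 0} {q. fst q \<noteq> snd q}"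
proof -
  define f where "f p = ((t0 - snd p) / fst p, (t1 - snd p) / fst p)" for p :: "'a \<times> 'a"
  define g where "g q = ((t1 - t0) / (snd q - fst q), t0 - (t1 - t0) / (snd q - fst q) * fst q)"
    for q :: "'a \<times> 'a"
  have t10: "t1 - t0 \<noteq> 0"
    using assms by simp
  have g_f: "g (f p) = p" if "fst p \<noteq> 0" for p
  proof -
    have "(t1 - snd p) / fst p - (t0 - snd p) / fst p = (t1 - t0) / fst p"
      by (simp add: diff_divide_distrib)
    then show ?thesis
      using that t10 by (simp add: f_def g_def prod_eq_iff)
  qed
  have f_g: "f (g q) = q" if "fst q \<noteq> snd q" for q
  proof -
    define a where "a = (t1 - t0) / (snd q - fst q)"
    have "a \<noteq> 0"
      using that t10 by (simp add: a_def)
    have "g q = (a, t0 - a * fst q)"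
      by (simp add: g_def a_def)
    then have "(t - snd (g q)) / fst (g q) = (t - t0) / a + fst q" for t
      using \<open>a \<noteq> 0\<close> by (simp add: field_simps)
    moreover have "(t1 - t0) / a = snd q - fst q"
      using that t10 by (simp add: a_def)
    ultimately show ?thesis
      by (simp add: f_def prod_eq_iff)
  qed
  have "bij_betw f {p. fst p \<noteq> 0} {q. fst q \<noteq> snd q}"
    by (rule bij_betw_byWitness[where f' = g])
       (use g_f f_g t10 assms in \<open>auto simp: f_def g_def divide_cancel_right\<close>)
  then show ?thesis
    unfolding f_def [abs_def] .
qed

text \<open>An affine map covers \<open>t0, t1, t2\<close> iff the preimages \<open>x, y\<close> of \<open>t0, t1\<close> lie in \<open>B\<close>
  together with the preimage \<open>x + r (y - x)\<close> of \<open>t2\<close>, where \<open>r = (t2 - t0) / (t1 - t0)\<close>.\<close>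

lemma card_affine_covering_three:
  fixes B :: "'a::field set"
  assumes "t0 \<noteq> t1"
  shows "card {p. fst p \<noteq> 0 \<and> {t0, t1, t2} \<subseteq> affine p ` B}
       = card {(x, y). x \<in> B \<and> y \<in> B \<and> x \<noteq> y \<and> x + (t2 - t0) / (t1 - t0) * (y - x) \<in> B}"
proof -
  let ?r = "(t2 - t0) / (t1 - t0)"
  let ?f = "\<lambda>p. ((t0 - snd p) / fst p, (t1 - snd p) / fst p)"
  let ?Q = "\<lambda>q. fst q \<in> B \<and> snd q \<in> B \<and> fst q + ?r * (snd q - fst q) \<in> B"
  have "{t0, t1, t2} \<subseteq> affine p ` B \<longleftrightarrow> ?Q (?f p)" if "fst p \<noteq> 0" for p
  proof -
    have "(t2 - snd p) / fst p = fst (?f p) + ?r * (snd (?f p) - fst (?f p))"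
      using that assms by (simp add: field_simps)
    then show ?thesis
      using that by (simp add: mem_affine_image_iff)
  qed
  then have "bij_betw ?f {p \<in> {p. fst p \<noteq> 0}. {t0, t1, t2} \<subseteq> affine p ` B} {q \<in> {q. fst q \<noteq> snd q}. ?Q q}"
    by (intro bij_betw_Collect[OF bij_betw_affine_preimages[OF assms]]) simp
  then have "card {p \<in> {p. fst p \<noteq> 0}. {t0, t1, t2} \<subseteq> affine p ` B} = card {q \<in> {q. fst q \<noteq> snd q}. ?Q q}"
    by (rule bij_betw_same_card)
  moreover have "{p \<in> {p. fst p \<noteq> 0}. {t0, t1, t2} \<subseteq> affine p ` B}
      = {p. fst p \<noteq> 0 \<and> {t0, t1, t2} \<subseteq> affine p ` B}"
    by blast
  moreover have "{q \<in> {q. fst q \<noteq> snd q}. ?Q q}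
      = {(x, y). x \<in> B \<and> y \<in> B \<and> x \<noteq> y \<and> x + ?r * (y - x) \<in> B}"
    by auto
  ultimately show ?thesis
    by simp
qed

lemma card_pairs_with_diagonal:
  assumes "finite B" and "\<And>x. x \<in> B \<Longrightarrow> P x x"
  shows "card {(x, y). x \<in> B \<and> y \<in> B \<and> P x y}
       = card {(x, y). x \<in> B \<and> y \<in> B \<and> x \<noteq> y \<and> P x y} + card B"
proof -
  let ?off = "{(x, y). x \<in> B \<and> y \<in> B \<and> x \<noteq> y \<and> P x y}"
  have "{(x, y). x \<in> B \<and> y \<in> B \<and> P x y} = ?off \<union> (\<lambda>x. (x, x)) ` B"
    using assms(2) by auto
  moreover have "finite ?off"
    by (rule finite_subset[of _ "B \<times> B"]) (use assms(1) in auto)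
  ultimately have "card {(x, y). x \<in> B \<and> y \<in> B \<and> P x y} = card ?off + card ((\<lambda>x. (x, x)) ` B)"
    using assms(1) by (simp only:) (rule card_Un_disjoint; auto)
  also have "card ((\<lambda>x. (x, x)) ` B) = card B"
    by (simp add: card_image inj_on_def)
  finally show ?thesis .
qed

lemma is_3_design_GA1_orbit_iff:
  fixes B :: "'a::{field,finite} set"
  shows "is_3_design UNIV (GA1_orbit B)
    \<longleftrightarrow> (\<exists>c. \<forall>r. r \<notin> {0, 1} \<longrightarrow> card {(x, y). x \<in> B \<and> y \<in> B \<and> x + r * (y - x) \<in> B} = c)"
proof -
  define s where "s = card {p :: 'a \<times> 'a. fst p \<noteq> 0 \<and> affine p ` B = B}"
  define C where "C r = card {(x, y). x \<in> B \<and> y \<in> B \<and> x \<noteq> y \<and> x + r * (y - x) \<in> B}" for r :: 'a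
  define lam where "lam T = card {Bl \<in> GA1_orbit B. T \<subseteq> Bl}" for T
  have "(1, 0) \<in> {p :: 'a \<times> 'a. fst p \<noteq> 0 \<and> affine p ` B = B}"
    by (simp add: affine_def)
  then have "s > 0"
    unfolding s_def using card_gt_0_iff finite_class.finite by blast
  have key: "lam {t0, t1, t2} * s = C ((t2 - t0) / (t1 - t0))" if "t0 \<noteq> t1" for t0 t1 t2
    using card_affine_covering[of "{t0, t1, t2}" B] card_affine_covering_three[OF that, of t2 B]
    by (simp add: lam_def s_def C_def)
  have "is_3_design UNIV (GA1_orbit B) \<longleftrightarrow> (\<exists>c. \<forall>r. r \<notin> {0, 1} \<longrightarrow> C r = c)"
  proof
    assume "is_3_design UNIV (GA1_orbit B)"
    then obtain l where l: "\<And>T. card T = 3 \<Longrightarrow> lam T = l"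
      unfolding is_3_design_def lam_def by blast
    have "C r = l * s" if "r \<notin> {0, 1}" for r
      using key[of 0 1 r] l[of "{0, 1, r}"] that by simp
    then show "\<exists>c. \<forall>r. r \<notin> {0, 1} \<longrightarrow> C r = c"
      by blast
  next
    assume "\<exists>c. \<forall>r. r \<notin> {0, 1} \<longrightarrow> C r = c"
    then obtain c where c: "\<And>r. r \<notin> {0, 1} \<Longrightarrow> C r = c"
      by blast
    have "lam T = c div s" if "card T = 3" for T
    proof -
      obtain t0 t1 t2 where T: "T = {t0, t1, t2}" and "t0 \<noteq> t1" "t0 \<noteq> t2" "t1 \<noteq> t2"
        using \<open>card T = 3\<close> unfolding card_3_iff by blast
      then have "(t2 - t0) / (t1 - t0) \<notin> {0, 1}"
        by (simp add: divide_eq_1_iff)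
      then have "lam T * s = c"
        using key \<open>t0 \<noteq> t1\<close> c T by simp
      then show ?thesis
        using \<open>s > 0\<close> by (metis nonzero_mult_div_cancel_right not_less0)
    qed
    then show "is_3_design UNIV (GA1_orbit B)"
      unfolding is_3_design_def lam_def by blast
  qed
  also have "\<dots> \<longleftrightarrow> (\<exists>c. \<forall>r. r \<notin> {0, 1} \<longrightarrow> card {(x, y). x \<in> B \<and> y \<in> B \<and> x + r * (y - x) \<in> B} = c)"
    by (rule ex_constant_iff_inj_comp[where g = "\<lambda>m. m + card B", symmetric])
       (auto simp: inj_def C_def card_pairs_with_diagonal)
  finally show ?thesis .
qed

section \<open>Counting solutions of linear equations\<close>

lemma N_count_eq_sum:
  fixes S :: "'a::{field,finite} set"
  shows "int (N_count S a b c) = (\<Sum>x\<in>S. \<Sum>y\<in>S. \<Sum>z\<in>S. of_bool (a * x + b * y + c * z = 0))"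
proof -
  have "{(x, y, z). x \<in> S \<and> y \<in> S \<and> z \<in> S \<and> a * x + b * y + c * z = 0}
      = (SIGMA x:S. SIGMA y:S. {z \<in> S. a * x + b * y + c * z = 0})"
    by auto
  then show ?thesis
    by (simp add: N_count_def Collect_conj_eq Int_commute)
qed

lemma N_count_swap:
  fixes S :: "'a::{field,finite} set"
  shows "N_count S a b c = N_count S b a c"
proof -
  have "int (N_count S a b c) = int (N_count S b a c)"
    unfolding N_count_eq_sum by (subst sum.swap) (simp add: add.commute)
  then show ?thesis
    by simp
qed

lemma N_count_one_eq_card_pairs:
  "N_count S a b 1 = card {(x, y). x \<in> S \<and> y \<in> S \<and> - (a * x + b * y) \<in> S}"
  unfolding N_count_def
  by (rule bij_betw_same_card[where f = "\<lambda>(x, y, z). (x, y)"],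
      rule bij_betw_byWitness[where f' = "\<lambda>(x, y). (x, y, - (a * x + b * y))"])
     (auto simp: add_eq_0_iff2 add.commute)

lemma N_count_affine_line:
  fixes B :: "'a::{field,finite} set"
  assumes "CHAR('a) = 2"
  shows "N_count B (1 + r) r 1 = card {(x, y). x \<in> B \<and> y \<in> B \<and> x + r * (y - x) \<in> B}"
proof -
  have "- ((1 + r) * x + r * y) = x + r * (y - x)" for x y
  proof -
    have "- ((1 + r) * x + r * y) = (1 + r) * x + r * y"
      by (rule uminus_CHAR_2[OF assms])
    also have "\<dots> = x + r * (y + x)"
      by (simp add: algebra_simps)
    also have "y + x = y - x"
      by (rule minus_CHAR_2[OF assms, symmetric])
    finally show ?thesis .
  qed
  then show ?thesis
    by (simp add: N_count_one_eq_card_pairs)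
qed

lemma sum_sum_affine_right:
  fixes g h :: "'a::{field,finite} \<Rightarrow> 'b::semiring_0"
  assumes "b \<noteq> 0"
  shows "(\<Sum>x\<in>UNIV. \<Sum>y\<in>UNIV. g x * h (a * x + b * y)) = sum g UNIV * sum h UNIV"
proof -
  have "(\<Sum>y\<in>UNIV. h (a * x + b * y)) = sum h UNIV" for x
    using assms by (intro sum.reindex_bij_witness[of _ "\<lambda>z. (z - a * x) / b" "\<lambda>y. a * x + b * y"]) auto
  then show ?thesis
    by (simp add: sum_distrib_left[symmetric] sum_distrib_right)
qed

lemma sum_sum_affine_left:
  fixes g h :: "'a::{field,finite} \<Rightarrow> 'b::semiring_0"
  assumes "a \<noteq> 0"
  shows "(\<Sum>x\<in>UNIV. \<Sum>y\<in>UNIV. g y * h (a * x + b * y)) = sum g UNIV * sum h UNIV"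
  using sum_sum_affine_right[where a = b and b = a] assms by (subst sum.swap) (simp add: add.commute)

lemma of_nat_card_pairs_eq_double_sum:
  fixes P :: "'a::finite \<Rightarrow> 'b::finite \<Rightarrow> bool"
  shows "of_nat (card {(x, y). P x y}) = (\<Sum>x\<in>UNIV. \<Sum>y\<in>UNIV. (of_bool (P x y) :: 'c::semiring_1))"
proof -
  have "(\<Sum>x\<in>UNIV. \<Sum>y\<in>UNIV. (of_bool (P x y) :: 'c)) = (\<Sum>(x, y)\<in>UNIV \<times> UNIV. of_bool (P x y))"
    by (rule sum.cartesian_product)
  also have "\<dots> = (\<Sum>p\<in>UNIV. of_bool (p \<in> {(x, y). P x y}))"
    by (intro sum.cong) auto
  finally show ?thesis
    by simp
qed

lemma sum_sign_charf_affine: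
  fixes E :: "'a::{field,finite} set"
  assumes "a \<noteq> 0" and "b \<noteq> 0"
  shows "(\<Sum>x\<in>UNIV. \<Sum>y\<in>UNIV. (-1::int) ^ (charf E x + charf E y + charf E (a * x + b * y)))
       = int (card (UNIV :: 'a set)) ^ 2 - 6 * int (card (UNIV :: 'a set)) * int (card E)
         + 12 * int (card E) ^ 2 - 8 * int (card {(x, y). x \<in> E \<and> y \<in> E \<and> a * x + b * y \<in> E})"
proof -
  define \<chi> where "\<chi> z = (of_bool (z \<in> E) :: int)" for z
  let ?q = "int (card (UNIV :: 'a set))"
  let ?k = "int (card E)"
  let ?z = "\<lambda>x y. a * x + b * y"
  \<comment> \<open>Any two of \<open>x\<close>, \<open>y\<close>, \<open>a x + b y\<close> vary independently, so only the triple product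
    sees more of \<open>E\<close> than its size.\<close>
  have sum_\<chi>: "sum \<chi> UNIV = ?k"
    by (simp add: \<chi>_def)
  have sign: "(-1::int) ^ (charf E x + charf E y + charf E (?z x y))
      = (1 - 2 * \<chi> x) * (1 - 2 * \<chi> y) - 2 * (1 * \<chi> (?z x y)) + 4 * (\<chi> x * \<chi> (?z x y))
        + 4 * (\<chi> y * \<chi> (?z x y)) - 8 * (\<chi> x * \<chi> y * \<chi> (?z x y))" for x y
    by (simp add: charf_def \<chi>_def power_add)
  have triples: "(\<Sum>x\<in>UNIV. \<Sum>y\<in>UNIV. \<chi> x * \<chi> y * \<chi> (?z x y))
      = int (card {(x, y). x \<in> E \<and> y \<in> E \<and> a * x + b * y \<in> E})"
    unfolding of_nat_card_pairs_eq_double_sum by (intro sum.cong refl) (simp add: \<chi>_def)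
  have "(\<Sum>x\<in>UNIV. \<Sum>y\<in>UNIV. (-1::int) ^ (charf E x + charf E y + charf E (?z x y)))
      = (\<Sum>x\<in>UNIV. \<Sum>y\<in>UNIV. (1 - 2 * \<chi> x) * (1 - 2 * \<chi> y))
        - 2 * (\<Sum>x\<in>UNIV. \<Sum>y\<in>UNIV. 1 * \<chi> (?z x y))
        + 4 * (\<Sum>x\<in>UNIV. \<Sum>y\<in>UNIV. \<chi> x * \<chi> (?z x y))
        + 4 * (\<Sum>x\<in>UNIV. \<Sum>y\<in>UNIV. \<chi> y * \<chi> (?z x y))
        - 8 * (\<Sum>x\<in>UNIV. \<Sum>y\<in>UNIV. \<chi> x * \<chi> y * \<chi> (?z x y))"
    unfolding sign by (simp only: sum.distrib sum_subtractf sum_distrib_left)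
  also have "\<dots> = (?q - 2 * ?k) ^ 2 - 2 * (?q * ?k) + 4 * ?k ^ 2 + 4 * ?k ^ 2
      - 8 * int (card {(x, y). x \<in> E \<and> y \<in> E \<and> a * x + b * y \<in> E})"
  proof -
    have "(\<Sum>x\<in>UNIV. \<Sum>y\<in>UNIV. (1 - 2 * \<chi> x) * (1 - 2 * \<chi> y)) = (?q - 2 * ?k) ^ 2"
      unfolding sum_product[symmetric]
      by (simp add: sum_subtractf sum_distrib_left[symmetric] sum_\<chi> power2_eq_square)
    moreover have "(\<Sum>x\<in>UNIV. \<Sum>y\<in>UNIV. 1 * \<chi> (?z x y)) = ?q * ?k"
      by (subst sum_sum_affine_right[OF assms(2)]) (simp add: sum_\<chi>)
    moreover have "(\<Sum>x\<in>UNIV. \<Sum>y\<in>UNIV. \<chi> x * \<chi> (?z x y)) = ?k ^ 2"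
      by (subst sum_sum_affine_right[OF assms(2)]) (simp add: sum_\<chi> power2_eq_square)
    moreover have "(\<Sum>x\<in>UNIV. \<Sum>y\<in>UNIV. \<chi> y * \<chi> (?z x y)) = ?k ^ 2"
      by (subst sum_sum_affine_left[OF assms(1)]) (simp add: sum_\<chi> power2_eq_square)
    ultimately show ?thesis
      unfolding triples by (simp only:)
  qed
  finally show ?thesis
    by (simp add: algebra_simps power2_eq_square)
qed

lemma sum_product_3:
  fixes f g h :: "_ \<Rightarrow> 'a::semiring_0"
  shows "sum f A * sum g B * sum h C = (\<Sum>x\<in>A. \<Sum>y\<in>B. \<Sum>z\<in>C. f x * g y * h z)"
proof -
  have "sum f A * sum g B * sum h C = (\<Sum>x\<in>A. \<Sum>y\<in>B. f x * g y) * sum h C"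
    by (subst sum_product) (rule refl)
  also have "\<dots> = (\<Sum>x\<in>A. \<Sum>y\<in>B. f x * g y * sum h C)"
    by (simp only: sum_distrib_right)
  finally show ?thesis
    by (simp only: sum_distrib_left)
qed

section \<open>Powers in a finite field\<close>

lemma power_gcd_eq_1:
  fixes x :: "'a::monoid_mult"
  assumes "x ^ m = 1" and "x ^ n = 1"
  shows "x ^ gcd m n = 1"
proof (cases "m = 0")
  case False
  then obtain u v where "m * u = n * v + gcd m n"
    using bezout_nat by blast
  then have "x ^ (m * u) = x ^ (n * v) * x ^ gcd m n"
    by (simp add: power_add)
  then show ?thesis
    using assms by (simp add: power_mult)
qed (use assms in simp)

lemma power_card_minus_one_eq_1:
  fixes x :: "'a::{field,finite}"
  assumes "x \<noteq> 0"
  shows "x ^ (card (UNIV :: 'a set) - 1) = 1"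
proof -
  \<comment> \<open>Lagrange in the multiplicative group; the library's \<open>finite_field_power_card_eq_same\<close>
    needs the sort \<open>finite_field\<close>, which a type of sort \<open>{field, finite}\<close> does not carry.\<close>
  let ?R = "ring_of_type_algebra :: 'a ring"
  let ?G = "Multiplicative_Group.mult_of ?R"
  interpret R: field ?R
    by (rule field_from_type_algebra)
  have carrier: "carrier ?R = UNIV"
    by (simp add: ring_of_type_algebra_def)
  have pow: "x [^]\<^bsub>?G\<^esub> m = x ^ m" for m
    by (induction m) (simp_all add: Multiplicative_Group.nat_pow_mult_of ring_of_type_algebra_def)
  have order_eq: "Coset.order ?G = card (UNIV :: 'a set) - 1"
    using R.order_mult_of by (simp add: carrier Coset.order_def)
  have "x [^]\<^bsub>?G\<^esub> Coset.order ?G = one ?G"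
    using assms by (intro group.pow_order_eq_1 R.field_mult_group) (simp add: carrier ring_of_type_algebra_def)
  then show ?thesis
    unfolding pow order_eq by (simp add: ring_of_type_algebra_def)
qed

lemma power_card_eq_self:
  fixes x :: "'a::{field,finite}"
  shows "x ^ card (UNIV :: 'a set) = x"
proof (cases "x = 0")
  case False
  have "card (UNIV :: 'a set) = Suc (card (UNIV :: 'a set) - 1)"
    using finite_UNIV_card_ge_0[where 'a = 'a] by simp
  then have "x ^ card (UNIV :: 'a set) = x * x ^ (card (UNIV :: 'a set) - 1)"
    by (metis power_Suc)
  then show ?thesis
    using power_card_minus_one_eq_1[OF False] by simp
qed (simp add: finite_UNIV_card_ge_0)

lemma inj_power_if_coprime:
  fixes d :: nat
  assumes "d > 0" and "gcd d (card (UNIV :: 'a::{field,finite} set) - 1) = 1"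
  shows "inj (\<lambda>x :: 'a. x ^ d)"
proof (rule injI)
  fix x y :: 'a
  assume eq: "x ^ d = y ^ d"
  show "x = y"
  proof (cases "y = 0")
    case False
    with eq assms(1) have "x \<noteq> 0"
      by (metis power_eq_0_iff)
    have "(x / y) ^ d = 1"
      using eq False by (simp add: power_divide)
    moreover have "(x / y) ^ (card (UNIV :: 'a set) - 1) = 1"
      using \<open>x \<noteq> 0\<close> False by (intro power_card_minus_one_eq_1) simp
    ultimately have "(x / y) ^ gcd d (card (UNIV :: 'a set) - 1) = 1"
      by (rule power_gcd_eq_1)
    then show ?thesis
      using assms(2) False by simp
  qed (use eq assms(1) in \<open>simp add: power_0_left\<close>)
qed

section \<open>The absolute trace and the Walsh transform\<close>

lemma abs_trace_add:
  fixes x y :: "'a::field"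
  assumes "CHAR('a) = 2"
  shows "abs_trace n (x + y) = abs_trace n x + abs_trace n y"
proof -
  have "(x + y) ^ 2 ^ i = x ^ 2 ^ i + y ^ 2 ^ i" for i
    by (rule freshmans_dream'[where n = i]) (simp_all add: assms)
  then show ?thesis
    by (simp add: abs_trace_def sum.distrib)
qed

definition trace_char_sum :: "nat \<Rightarrow> 'a::{field,finite} set \<Rightarrow> 'a \<Rightarrow> int" where
  "trace_char_sum n S \<mu> = (\<Sum>x\<in>S. sgn_gf2 (abs_trace n (\<mu> * x)))"

context
  fixes n :: nat
  assumes card_UNIV: "card (UNIV :: 'a::{field,finite} set) = 2 ^ n"
begin

lemma CHAR_eq_2: "CHAR('a) = 2"
proof -
  note prime_CHAR_semidom[OF finite_imp_CHAR_pos[where 'a = 'a, OF finite_UNIV]]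
  moreover have "CHAR('a) dvd 2 ^ n"
    using CHAR_dvd_CARD[where 'a = 'a] card_UNIV by simp
  ultimately show ?thesis
    using prime_dvd_power primes_dvd_imp_eq two_is_prime_nat by blast
qed

lemma two_eq_0: "(2 :: 'a) = 0"
  using of_nat_CHAR[where 'a = 'a] by (simp add: CHAR_eq_2)

lemma abs_trace_square: "abs_trace n (x :: 'a) ^ 2 = abs_trace n x"
proof -
  have "abs_trace n x ^ 2 = (\<Sum>i<n. x ^ 2 ^ Suc i)"
    unfolding abs_trace_def
    by (subst freshmans_dream_sum'[where n = 1]) (simp_all add: CHAR_eq_2 power_mult[symmetric] mult.commute)
  also have "\<dots> = (\<Sum>i<Suc n. x ^ 2 ^ i) - x"
    by (subst sum.lessThan_Suc_shift) simp
  also have "\<dots> = abs_trace n x + x ^ 2 ^ n - x"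
    by (simp add: abs_trace_def)
  also have "x ^ 2 ^ n = x"
    using power_card_eq_self card_UNIV by metis
  finally show ?thesis
    by simp
qed

lemma abs_trace_eq_0_or_1: "abs_trace n (x :: 'a) = 0 \<or> abs_trace n x = 1"
proof -
  have "abs_trace n x * (abs_trace n x - 1) = 0"
    using abs_trace_square[of x] by (simp add: power2_eq_square algebra_simps)
  then show ?thesis
    by simp
qed

lemma sgn_gf2_abs_trace_add:
  "sgn_gf2 (abs_trace n ((x :: 'a) + y)) = sgn_gf2 (abs_trace n x) * sgn_gf2 (abs_trace n y)"
  using abs_trace_eq_0_or_1[of x] abs_trace_eq_0_or_1[of y]
  by (auto simp: abs_trace_add[OF CHAR_eq_2] sgn_gf2_def two_eq_0)

lemma ex_abs_trace_neq_0: "\<exists>x :: 'a. abs_trace n x \<noteq> 0"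
proof (rule ccontr)
  assume all_zero: "\<not> ?thesis"
  define p :: "'a poly" where "p = (\<Sum>i<n. monom 1 (2 ^ i))"
  have "card {0 :: 'a, 1} \<le> card (UNIV :: 'a set)"
    by (rule card_mono) auto
  then have "n > 0"
    using card_UNIV by (cases n) auto
  have "coeff p 1 = (\<Sum>i<n. if i = 0 then 1 else 0)"
    unfolding p_def by (simp add: coeff_sum coeff_monom)
  also have "\<dots> = 1"
    using \<open>n > 0\<close> by simp
  finally have "p \<noteq> 0"
    by auto
  then have "card {x. poly p x = 0} \<le> degree p"
    by (rule card_poly_roots_bound)
  moreover have "poly p x = abs_trace n x" for x
    unfolding p_def abs_trace_def by (simp add: poly_sum poly_monom)
  then have "{x. poly p x = 0} = UNIV"
    using all_zero by auto
  moreover have "degree p \<le> 2 ^ (n - 1)"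
    unfolding p_def
    by (intro degree_sum_le) (auto intro: order.trans[OF degree_monom_le] power_increasing)
  moreover have "(2::nat) ^ (n - 1) < 2 ^ n"
    using \<open>n > 0\<close> by (intro power_strict_increasing) auto
  ultimately show False
    using card_UNIV by simp
qed

lemma sum_sgn_gf2_abs_trace:
  "(\<Sum>x\<in>UNIV. sgn_gf2 (abs_trace n (\<mu> * (x :: 'a)))) = (if \<mu> = 0 then 2 ^ n else 0)"
proof (cases "\<mu> = 0")
  case True
  then show ?thesis
    by (simp add: abs_trace_def sgn_gf2_def card_UNIV power_0_left)
next
  case False
  obtain x0 :: 'a where "abs_trace n x0 \<noteq> 0"
    using ex_abs_trace_neq_0 by blast
  then have x0: "sgn_gf2 (abs_trace n x0) = -1"
    using abs_trace_eq_0_or_1 by (auto simp: sgn_gf2_def)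
  let ?S = "\<Sum>x\<in>UNIV. sgn_gf2 (abs_trace n (\<mu> * x))"
  have "?S = (\<Sum>x\<in>UNIV. sgn_gf2 (abs_trace n (\<mu> * (x + x0 / \<mu>))))"
    by (rule sum.reindex_bij_witness[of _ "\<lambda>x. x + x0 / \<mu>" "\<lambda>x. x - x0 / \<mu>"]) auto
  also have "\<dots> = - ?S"
    using False by (simp add: distrib_left sgn_gf2_abs_trace_add x0 sum_negf)
  finally show ?thesis
    using False by simp
qed

lemma walsh_eq_trace_char_sum:
  "walsh n S \<mu> = (if \<mu> = 0 then 2 ^ n else 0) - 2 * trace_char_sum n S (\<mu> :: 'a)"
proof -
  have "walsh n S \<mu> = (\<Sum>x\<in>UNIV. sgn_gf2 (abs_trace n (\<mu> * x))
      - 2 * (of_bool (x \<in> S) * sgn_gf2 (abs_trace n (\<mu> * x))))"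
    unfolding walsh_def by (intro sum.cong refl) (simp add: charf_def)
  then show ?thesis
    by (simp add: sum_subtractf sum_distrib_left[symmetric] sum_sgn_gf2_abs_trace trace_char_sum_def)
qed

lemma N_count_eq_sum_trace_char_sum:
  "2 ^ n * int (N_count S a b c)
     = (\<Sum>\<mu>\<in>UNIV. trace_char_sum n S (a * \<mu>) * trace_char_sum n S (b * \<mu>) * trace_char_sum n S (c * (\<mu> :: 'a)))"
proof -
  have "trace_char_sum n S (a * \<mu>) * trace_char_sum n S (b * \<mu>) * trace_char_sum n S (c * \<mu>)
      = (\<Sum>x\<in>S. \<Sum>y\<in>S. \<Sum>z\<in>S. sgn_gf2 (abs_trace n (\<mu> * (a * x + b * y + c * z))))" for \<mu>
  proof -
    have "\<mu> * (a * x + b * y + c * z) = a * \<mu> * x + b * \<mu> * y + c * \<mu> * z" for x y z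
      by (simp add: algebra_simps)
    then show ?thesis
      by (simp add: trace_char_sum_def sum_product_3 sgn_gf2_abs_trace_add)
  qed
  then have "(\<Sum>\<mu>\<in>UNIV. trace_char_sum n S (a * \<mu>) * trace_char_sum n S (b * \<mu>) * trace_char_sum n S (c * \<mu>))
      = (\<Sum>x\<in>S. \<Sum>y\<in>S. \<Sum>z\<in>S. \<Sum>\<mu>\<in>UNIV. sgn_gf2 (abs_trace n (\<mu> * (a * x + b * y + c * z))))"
    by (simp only: sum.swap[of _ UNIV])
  also have "\<dots> = (\<Sum>x\<in>S. \<Sum>y\<in>S. \<Sum>z\<in>S. 2 ^ n * of_bool (a * x + b * y + c * z = 0))"
    by (simp only: mult.commute[of _ "a * _ + _ + _"] sum_sgn_gf2_abs_trace) (intro sum.cong refl; simp)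
  also have "\<dots> = 2 ^ n * int (N_count S a b c)"
    unfolding N_count_eq_sum by (simp only: sum_distrib_left)
  finally show ?thesis ..
qed

lemma sum_walsh_triple:
  fixes E :: "'a set"
  assumes "a \<noteq> 0" and "b \<noteq> 0"
  shows "(\<Sum>\<alpha>\<in>UNIV. walsh n E \<alpha> * walsh n E (a * \<alpha>) * walsh n E (b * \<alpha>))
       = (2 ^ n - 2 * int (card E)) ^ 3 - 8 * (2 ^ n * int (N_count E a b 1) - int (card E) ^ 3)"
proof -
  let ?W = "\<lambda>\<alpha>. walsh n E \<alpha> * walsh n E (a * \<alpha>) * walsh n E (b * \<alpha>)"
  let ?T = "\<lambda>\<alpha>. trace_char_sum n E (a * \<alpha>) * trace_char_sum n E (b * \<alpha>) * trace_char_sum n E (1 * \<alpha>)"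
  have T0: "trace_char_sum n E 0 = int (card E)"
    by (simp add: trace_char_sum_def abs_trace_def sgn_gf2_def power_0_left)
  have "sum ?W UNIV = ?W 0 + (\<Sum>\<alpha>\<in>UNIV - {0}. - 8 * ?T \<alpha>)"
    using assms by (simp add: sum.remove[of UNIV 0] walsh_eq_trace_char_sum mult_ac)
  also have "(\<Sum>\<alpha>\<in>UNIV - {0}. - 8 * ?T \<alpha>) = - 8 * (sum ?T UNIV - ?T 0)"
    by (simp add: sum_negf sum_diff1 flip: sum_distrib_left)
  also have "sum ?T UNIV = 2 ^ n * int (N_count E a b 1)"
    by (rule N_count_eq_sum_trace_char_sum[symmetric])
  finally show ?thesis
    by (simp add: walsh_eq_trace_char_sum T0 power3_eq_cube)
qed

lemma N_count_power_transfer: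
  fixes B E :: "'a set"
  assumes "\<forall>\<mu>. walsh n B \<mu> = walsh n E (\<mu> ^ d)" and "d > 0" and "gcd d (2 ^ n - 1) = 1"
  shows "N_count B a b c = N_count E (a ^ d) (b ^ d) (c ^ d)"
proof -
  have char_sum_eq: "trace_char_sum n B \<mu> = trace_char_sum n E (\<mu> ^ d)" for \<mu>
    using assms(1,2) by (simp add: walsh_eq_trace_char_sum)
  have "inj (\<lambda>\<mu> :: 'a. \<mu> ^ d)"
    using assms(2,3) card_UNIV by (intro inj_power_if_coprime) simp_all
  then have "bij (\<lambda>\<mu> :: 'a. \<mu> ^ d)"
    by (simp add: bij_def finite_UNIV_inj_surj)
  have "2 ^ n * int (N_count B a b c)
      = (\<Sum>\<mu>\<in>UNIV. trace_char_sum n E (a ^ d * \<mu> ^ d) * trace_char_sum n E (b ^ d * \<mu> ^ d)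
          * trace_char_sum n E (c ^ d * \<mu> ^ d))"
    by (simp add: N_count_eq_sum_trace_char_sum char_sum_eq power_mult_distrib)
  also have "\<dots> = (\<Sum>\<nu>\<in>UNIV. trace_char_sum n E (a ^ d * \<nu>) * trace_char_sum n E (b ^ d * \<nu>)
          * trace_char_sum n E (c ^ d * \<nu>))"
    using \<open>bij (\<lambda>\<mu> :: 'a. \<mu> ^ d)\<close> by (rule sum.reindex_bij_betw)
  also have "\<dots> = 2 ^ n * int (N_count E (a ^ d) (b ^ d) (c ^ d))"
    by (rule N_count_eq_sum_trace_char_sum[symmetric])
  finally show ?thesis
    by simp
qed

lemma one_add_eq_0_iff: "1 + u = (0 :: 'a) \<longleftrightarrow> u = 1"
  by (simp add: add_eq_0_iff uminus_CHAR_2[OF CHAR_eq_2])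

lemma is_3_design_iff_constant_N_count:
  fixes B E :: "'a set"
  assumes "\<forall>\<mu>. walsh n B \<mu> = walsh n E (\<mu> ^ d)" and "d > 0" and "gcd d (2 ^ n - 1) = 1"
  shows "is_3_design UNIV (GA1_orbit B)
    \<longleftrightarrow> (\<exists>c. \<forall>u. u \<notin> {0, 1} \<longrightarrow> N_count E (u ^ d) ((1 + u) ^ d) 1 = c)"
proof -
  have "card {(x, y). x \<in> B \<and> y \<in> B \<and> x + u * (y - x) \<in> B} = N_count E (u ^ d) ((1 + u) ^ d) 1" for u
    using N_count_affine_line[OF CHAR_eq_2, of B u] N_count_power_transfer[OF assms, of "1 + u" u 1]
      N_count_swap[of E "(1 + u) ^ d"] by simp
  then show ?thesis
    by (simp add: is_3_design_GA1_orbit_iff)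
qed

lemma constant_sum_sign_iff_constant_N_count:
  fixes E :: "'a set"
  assumes "\<And>u. P u \<Longrightarrow> a u \<noteq> 0 \<and> b u \<noteq> 0"
  shows "(\<exists>c. \<forall>u. P u \<longrightarrow> (\<Sum>x\<in>UNIV. \<Sum>y\<in>UNIV.
            (-1::int) ^ (charf E x + charf E y + charf E (a u * x + b u * y))) = c)
    \<longleftrightarrow> (\<exists>c. \<forall>u. P u \<longrightarrow> N_count E (a u) (b u) 1 = c)"
  by (rule ex_constant_iff_inj_comp[where g = "\<lambda>m. 2 ^ n * 2 ^ n - 6 * 2 ^ n * int (card E)
        + 12 * int (card E) ^ 2 - 8 * int m"])
     (use assms in \<open>simp_all add: inj_def sum_sign_charf_affine card_UNIV power2_eq_square
        N_count_one_eq_card_pairs uminus_CHAR_2[OF CHAR_eq_2]\<close>)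

lemma constant_sum_walsh_iff_constant_N_count:
  fixes E :: "'a set"
  assumes "\<And>u. P u \<Longrightarrow> a u \<noteq> 0 \<and> b u \<noteq> 0"
  shows "(\<exists>c. \<forall>u. P u \<longrightarrow>
            (\<Sum>\<alpha>\<in>UNIV. walsh n E \<alpha> * walsh n E (a u * \<alpha>) * walsh n E (b u * \<alpha>)) = c)
    \<longleftrightarrow> (\<exists>c. \<forall>u. P u \<longrightarrow> N_count E (a u) (b u) 1 = c)"
  by (rule ex_constant_iff_inj_comp[where g = "\<lambda>m. (2 ^ n - 2 * int (card E)) ^ 3
        - 8 * (2 ^ n * int m - int (card E) ^ 3)"])
     (use assms in \<open>simp_all add: inj_def sum_walsh_triple\<close>)

end

theorem theorem8:
  fixes B E :: "('a::{field,finite}) set" and n k d :: nat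
  assumes q: "card (UNIV :: 'a set) = 2 ^ n"
    and Bk: "card B = k" and k3: "k \<ge> 3"
    and hE: "\<forall>\<mu>::'a. walsh n B \<mu> = walsh n E (\<mu> ^ d)"
    and hd: "gcd d (2 ^ n - 1) = 1"
  shows "(is_3_design (UNIV :: 'a set) (GA1_orbit B) \<longleftrightarrow>
           (\<exists>c. \<forall>u::'a. u \<notin> {0, 1} \<longrightarrow>
              (\<Sum>x\<in>UNIV. \<Sum>y\<in>UNIV. (-1::int) ^ (charf E x + charf E y
                   + charf E (u ^ d * x + (1 + u) ^ d * y))) = c))
       \<and> ((\<exists>c. \<forall>u::'a. u \<notin> {0, 1} \<longrightarrow>
              (\<Sum>x\<in>UNIV. \<Sum>y\<in>UNIV. (-1::int) ^ (charf E x + charf E y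
                   + charf E (u ^ d * x + (1 + u) ^ d * y))) = c) \<longleftrightarrow>
           (\<exists>c. \<forall>u::'a. u \<notin> {0, 1} \<longrightarrow>
              (\<Sum>\<alpha>\<in>UNIV. walsh n E \<alpha> * walsh n E (u ^ d * \<alpha>)
                   * walsh n E ((1 + u) ^ d * \<alpha>)) = c))
       \<and> ((\<exists>c. \<forall>u::'a. u \<notin> {0, 1} \<longrightarrow>
              (\<Sum>\<alpha>\<in>UNIV. walsh n E \<alpha> * walsh n E (u ^ d * \<alpha>)
                   * walsh n E ((1 + u) ^ d * \<alpha>)) = c) \<longleftrightarrow>
           (\<exists>c. \<forall>u::'a. u \<notin> {0, 1} \<longrightarrow> N_count E (u ^ d) ((1 + u) ^ d) 1 = c))"
proof -
  \<comment> \<open>This is the only use of \<open>k \<ge> 3\<close>: for \<open>d = 0\<close> the hypothesis on \<open>d\<close> forces \<open>q = 2\<close>.\<close>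
  have "d > 0"
  proof (rule ccontr)
    assume "\<not> d > 0"
    then have "card (UNIV :: 'a set) = 2"
      using hd q by simp
    moreover have "card B \<le> card (UNIV :: 'a set)"
      by (rule card_mono) auto
    ultimately show False
      using Bk k3 by simp
  qed
  have "u ^ d \<noteq> 0 \<and> (1 + u) ^ d \<noteq> 0" if "u \<notin> {0, 1}" for u :: 'a
    using that by (simp add: one_add_eq_0_iff[OF q])
  then show ?thesis
    using is_3_design_iff_constant_N_count[OF q hE \<open>d > 0\<close> hd]
      constant_sum_sign_iff_constant_N_count[OF q, where P = "\<lambda>u. u \<notin> {0, 1}"
        and a = "\<lambda>u. u ^ d" and b = "\<lambda>u. (1 + u) ^ d" and E = E]
      constant_sum_walsh_iff_constant_N_count[OF q, where P = "\<lambda>u. u \<notin> {0, 1}"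
        and a = "\<lambda>u. u ^ d" and b = "\<lambda>u. (1 + u) ^ d" and E = E]
    by blast
qed

end
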